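(* Let $\lambda$ be a nonzero real number. For all integers $m,n\ge 0$, $$\binom{n+m}{n}H_{n+m,\lambda}=\sum_{l=0}^{n}H_{l,\lambda}\binom{m+n-l-1}{n-l}+H_{m,\lambda}\binom{m+n-\lambda}{n},$$ where $H_{j,\lambda}$ denotes the $j$-th degenerate harmonic number.
   Context: For nonzero real $\lambda$, the degenerate harmonic numbers are defined by $H_{0,\lambda}=0$ and, for $j\ge 1$, $$H_{j,\lambda}=\frac{1}{\lambda}\sum_{k=1}^{j}\binom{\lambda}{k}(-1)^{k-1}=\sum_{k=1}^{j}\binom{\lambda-1}{k-1}\frac{(-1)^{k-1}}{k}.$$ Equivalently, $\frac{1}{1-t}\log_{-\lambda}\!\left(\frac{1}{1-t}\right)=\sum_{j\ge1}H_{j,\lambda}t^j$, where $\log_{\mu}(t)=\frac{1}{\mu}(t^{\mu}-1)$. Binomial coefficients are the generalized ones: for any real $a$ and integer $j\ge 0$, $\binom{a}{j}=\frac{a(a-1)\cdots(a-j+1)}{j!}$, with $\binom{a}{0}=1$; in particular $\binom{-1}{0}=1$. *)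

theory Defs
  imports Complex_Main
begin

definition deg_harm :: "nat \<Rightarrow> real \<Rightarrow> real" where
  "deg_harm j lam = (1 / lam) * (\<Sum>k=1..j. (lam gchoose k) * (-1) ^ (k - 1))"

end

theory Submission
  imports Defs "HOL-Computational_Algebra.Formal_Power_Series"
begin

(* Summing the alternating row of binomial coefficients gives the closed form
   lambda H(j) = 1 - D(j) with D(j) = binom(j - lambda, j).  After multiplying by lambda,
   the constant terms of the identity agree by the parallel Vandermonde identity
   sum_k binom(a + k, k) binom(b + n - k, n - k) = binom(a + b + n + 1, n) at a = 0, the
   D-terms by the same identity at a = -lambda, and what remains,
   binom(n + m, n) D(n + m) = D(m) binom(m + n - lambda, n), is trinomial revision. *)

lemma gbinomial_Vandermonde_parallel:
  fixes a b :: "'a :: field_char_0"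
  shows "(\<Sum>k=0..n. ((a + of_nat k) gchoose k) * ((b + of_nat (n - k)) gchoose (n - k)))
    = (a + b + of_nat n + 1) gchoose n"
proof -
  have upper: "(c + of_nat j) gchoose j = (-1) ^ j * ((- c - 1) gchoose j)" for c :: 'a and j
    by (subst gbinomial_negated_upper) (simp add: algebra_simps)
  have "(\<Sum>k=0..n. ((a + of_nat k) gchoose k) * ((b + of_nat (n - k)) gchoose (n - k)))
      = (-1) ^ n * (\<Sum>k=0..n. ((- a - 1) gchoose k) * ((- b - 1) gchoose (n - k)))"
    unfolding sum_distrib_left
  proof (rule sum.cong)
    fix k assume "k \<in> {0..n}"
    then have "(-1 :: 'a) ^ k * (-1) ^ (n - k) = (-1) ^ n"
      by (simp flip: power_add)
    then show "((a + of_nat k) gchoose k) * ((b + of_nat (n - k)) gchoose (n - k))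
        = (-1) ^ n * (((- a - 1) gchoose k) * ((- b - 1) gchoose (n - k)))"
      unfolding upper by (metis (no_types, lifting) mult.assoc mult.left_commute)
  qed simp
  also have "\<dots> = (-1) ^ n * ((- a - 1 - b - 1) gchoose n)"
    by (simp add: gbinomial_Vandermonde)
  also have "\<dots> = (a + b + of_nat n + 1) gchoose n"
    using upper[of "a + b + 1" n] by (simp add: algebra_simps)
  finally show ?thesis .
qed

lemma deg_harm_eq_gchoose: "deg_harm j lam = (1 - ((real j - lam) gchoose j)) / lam"
proof -
  have "(\<Sum>k=1..j. (lam gchoose k) * (-1) ^ (k - 1)) = 1 - (\<Sum>k\<le>j. (lam gchoose k) * (-1) ^ k)"
  proof -
    have "(\<Sum>k\<le>j. (lam gchoose k) * (-1) ^ k) = 1 + (\<Sum>k=1..j. (lam gchoose k) * (-1) ^ k)"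
      by (simp add: atMost_atLeast0 sum.atLeast_Suc_atMost)
    moreover have "(\<Sum>k=1..j. (lam gchoose k) * (-1) ^ k) = - (\<Sum>k=1..j. (lam gchoose k) * (-1) ^ (k - 1))"
      by (simp add: sum_negf[symmetric] power_eq_if)
    ultimately show ?thesis by simp
  qed
  also have "\<dots> = 1 - ((real j - lam) gchoose j)"
    by (simp add: gbinomial_sum_lower_neg gbinomial_negated_upper[of "lam - 1"] algebra_simps
        flip: power_mult_distrib)
  finally show ?thesis
    by (simp add: deg_harm_def)
qed

theorem theorem2p3:
  fixes lam :: real and m n :: nat
  assumes "lam \<noteq> 0"
  shows "(real (n + m) gchoose n) * deg_harm (n + m) lam =
    (\<Sum>l=0..n. deg_harm l lam * ((real m + real n - real l - 1) gchoose (n - l)))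
    + deg_harm m lam * ((real m + real n - lam) gchoose n)"
proof -
  define D where "D j = (real j - lam) gchoose j" for j
  define B where "B l = (real m + real n - real l - 1) gchoose (n - l)" for l
  define C where "C = real (n + m) gchoose n"
  define G where "G = (real m + real n - lam) gchoose n"
  have parallel: "(\<Sum>l=0..n. (a + real l gchoose l) * B l) = (a + real m + real n gchoose n)" for a
  proof -
    have "(\<Sum>l=0..n. (a + real l gchoose l) * B l)
        = (\<Sum>l=0..n. (a + real l gchoose l) * ((real m - 1 + real (n - l)) gchoose (n - l)))"
      by (intro sum.cong) (auto simp: B_def of_nat_diff algebra_simps)
    also have "\<dots> = (a + (real m - 1) + real n + 1 gchoose n)"
      by (rule gbinomial_Vandermonde_parallel)
    finally show ?thesis
      by (simp add: algebra_simps)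
  qed
  have sum_B: "(\<Sum>l=0..n. B l) = C"
    using parallel[of 0] by (simp add: C_def add.commute flip: binomial_gbinomial)
  have sum_DB: "(\<Sum>l=0..n. D l * B l) = G"
    using parallel[of "- lam"] by (simp add: D_def G_def algebra_simps)
  have revision: "C * D (n + m) = D m * G"
    using gbinomial_trinomial_revision[of n "n + m" "real (n + m) - lam"]
    by (simp add: C_def D_def G_def algebra_simps)
  have harm: "deg_harm j lam = (1 - D j) / lam" for j
    by (simp add: deg_harm_eq_gchoose D_def)
  have "(\<Sum>l=0..n. deg_harm l lam * B l) = (C - G) / lam"
    by (simp add: harm sum_B sum_DB left_diff_distrib sum_subtractf flip: sum_divide_distrib)
  moreover have "C * deg_harm (n + m) lam = (C - G) / lam + deg_harm m lam * G"
    using revision assms by (simp add: harm field_simps)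
  ultimately show ?thesis
    by (simp add: B_def C_def G_def)
qed

end
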